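(* Let $F:\mathbb R^n\rightrightarrows\mathbb R^n$ be a multifunction with nonempty, convex, compact values which is Lipschitz continuous. Let $H(x,p)=\sup_{v\in F(x)}\langle p,v\rangle$ and assume: (H1) there is $c_0\ge 0$ such that for every $p$ the map $x\mapsto H(x,p)$ is semiconvex with constant $c_0\|p\|$; (H2) for every $p\neq 0$, $\nabla_pH(x,p)$ exists for all $x$ and there is $K_1\ge 0$ with $\|\nabla_pH(x,p)-\nabla_pH(y,p)\|\le K_1\|x-y\|$ for all $x,y$, $p\ne0$. Let $\mathcal S\subseteq\mathbb R^n$ be closed with minimum time function $T$. Let $x\in\mathbb R^n\setminus\mathcal S$ with $T(x)<\infty$, let $x(\cdot)$ be an optimal trajectory starting at $x$ and reaching $\mathcal S$ at time $T(x)$, set $\bar x=x(T(x))$, and let $\xi$ be a unit vector in $N^P_{\overline{\mathbb R^n\setminus\mathcal S}}(\bar x)$. Let $p:[0,T(x)]\to\mathbb R^n$ be an absolutely continuous arc with $p(t)\ne0$ for all $t$ such that $$\dot x(t)=F_{p(t)}(x(t)),\qquad -\dot p(t)\in\partial_xH(x(t),p(t))\qquad\text{for a.e. } t\in[0,T(x)].$$ Then: (i) if $H(\bar x,\xi)\ne0$ and $p(T(x))=\xi/H(\bar x,\xi)$, then $H(x(t),p(t))=1$ for all $t\in[0,T(x)]$; (ii) if $H(\bar x,\xi)=0$ and $p(T(x))=\xi$, then $H(x(t),p(t))=0$ for all $t\in[0,T(x)]$.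
   Context: Trajectories are absolutely continuous solutions of $\dot y(t)\in F(y(t))$ a.e. The minimum time function is $T(x)=\inf\{\tau>0:\ \exists$ a trajectory $y$ with $y(0)=x$, $y(\tau)\in\mathcal S\}$ ($\inf\emptyset=+\infty$); an optimal trajectory from $x$ is a trajectory with $x(0)=x$ and $x(T(x))\in\mathcal S$. For $p\ne0$, $F_p(x):=\nabla_pH(x,p)$. $\partial_xH$ is Clarke's generalized gradient in $x$. $N^P_Q(z)$ is the proximal normal cone: $v\in N^P_Q(z)$ iff $\exists\sigma\ge0$ with $\langle v,y-z\rangle\le\sigma\|y-z\|^2$ for all $y\in Q$. A function $h$ is semiconvex with constant $c$ if $-h$ is continuous and $\frac{-h(x_1)-h(x_2)}2+h(\frac{x_1+x_2}2)\le\frac c4\|x_1-x_2\|^2$. *)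

theory Defs
  imports "HOL-Analysis.Analysis" "HOL-Library.Liminf_Limsup"
begin

definition abs_cont_on :: "real \<Rightarrow> real \<Rightarrow> (real \<Rightarrow> 'a::real_normed_vector) \<Rightarrow> bool" where
  "abs_cont_on a b f \<longleftrightarrow>
     (\<forall>\<epsilon>>0. \<exists>\<delta>>0. \<forall>(n::nat) (u::nat \<Rightarrow> real) v.
        (\<forall>i<n. a \<le> u i \<and> u i \<le> v i \<and> v i \<le> b) \<and>
        (\<forall>i<n. \<forall>j<n. i \<noteq> j \<longrightarrow> v i \<le> u j \<or> v j \<le> u i) \<and>
        (\<Sum>i<n. v i - u i) < \<delta>
        \<longrightarrow> (\<Sum>i<n. norm (f (v i) - f (u i))) < \<epsilon>)"

text \<open>Lipschitz continuity of a multifunction (w.r.t. the Hausdorff distance).\<close>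
definition lipschitz_multifun :: "('a::euclidean_space \<Rightarrow> 'a set) \<Rightarrow> bool" where
  "lipschitz_multifun F \<longleftrightarrow>
     (\<exists>L\<ge>0. \<forall>x y. \<forall>v\<in>F x. \<exists>w\<in>F y. dist v w \<le> L * dist x y)"

definition trajectory :: "('a::euclidean_space \<Rightarrow> 'a set) \<Rightarrow> real \<Rightarrow> (real \<Rightarrow> 'a) \<Rightarrow> bool" where
  "trajectory F \<tau> y \<longleftrightarrow> abs_cont_on 0 \<tau> y \<and>
     (\<exists>N. N \<in> null_sets lebesgue \<and>
        (\<forall>t\<in>{0..\<tau>} - N. \<exists>d. (y has_vector_derivative d) (at t within {0..\<tau>}) \<and> d \<in> F (y t)))"

text \<open>Minimum time function (value +\<infinity> if the target is not reachable).\<close>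
definition min_time :: "('a::euclidean_space \<Rightarrow> 'a set) \<Rightarrow> 'a set \<Rightarrow> 'a \<Rightarrow> ereal" where
  "min_time F S x = Inf (ereal ` {\<tau>. \<tau> > 0 \<and> (\<exists>y. trajectory F \<tau> y \<and> y 0 = x \<and> y \<tau> \<in> S)})"

definition hamiltonian :: "('a::euclidean_space \<Rightarrow> 'a set) \<Rightarrow> 'a \<Rightarrow> 'a \<Rightarrow> real" where
  "hamiltonian F x p = (SUP v\<in>F x. p \<bullet> v)"

definition grad_p_H :: "('a::euclidean_space \<Rightarrow> 'a set) \<Rightarrow> 'a \<Rightarrow> 'a \<Rightarrow> 'a" where
  "grad_p_H F x p =
     (SOME g. ((\<lambda>q. hamiltonian F x q) has_derivative (\<lambda>h. g \<bullet> h)) (at p))"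

definition semiconvex_with :: "real \<Rightarrow> ('a::euclidean_space \<Rightarrow> real) \<Rightarrow> bool" where
  "semiconvex_with c h \<longleftrightarrow> continuous_on UNIV (\<lambda>x. - h x) \<and>
     (\<forall>x1 x2. (- h x1 - h x2) / 2 + h ((x1 + x2) /\<^sub>R 2) \<le> c / 4 * (norm (x1 - x2))\<^sup>2)"

definition clarke_dd :: "('a::euclidean_space \<Rightarrow> real) \<Rightarrow> 'a \<Rightarrow> 'a \<Rightarrow> ereal" where
  "clarke_dd f x v =
     Limsup (nhds x \<times>\<^sub>F at_right 0) (\<lambda>(y, t). ereal ((f (y + t *\<^sub>R v) - f y) / t))"

definition clarke_grad :: "('a::euclidean_space \<Rightarrow> real) \<Rightarrow> 'a \<Rightarrow> 'a set" where
  "clarke_grad f x = {\<zeta>. \<forall>v. ereal (\<zeta> \<bullet> v) \<le> clarke_dd f x v}"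

definition proximal_normal :: "'a::euclidean_space set \<Rightarrow> 'a \<Rightarrow> 'a set" where
  "proximal_normal Q z = {v. \<exists>\<sigma>\<ge>0. \<forall>y\<in>Q. v \<bullet> (y - z) \<le> \<sigma> * (norm (y - z))\<^sup>2}"

end

theory Submission
  imports Defs
begin

text \<open>Along the extremal, \<open>g(t) = H(x(t), p(t))\<close> is absolutely continuous, and at almost every \<open>t\<close>
  it satisfies \<open>g(s) \<ge> g(t) - o(|s - t|)\<close>: in the subgradient inequality for the semiconvex map
  \<open>H(\<cdot>, p(t))\<close> at \<open>x(t)\<close>, with the Clarke subgradient \<open>-p'(t)\<close>, and in a mean-value estimate
  for the mixed differences of \<open>H\<close>, which uses the Lipschitz continuity of \<open>\<nabla>\<^sub>pH\<close> in \<open>x\<close>, the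
  first-order terms cancel because \<open>x' = \<nabla>\<^sub>pH(x, p)\<close>. An absolutely continuous function with this
  two-sided Dini property is constant (via Dini-derivative monotonicity off a null set), so
  \<open>g \<equiv> H(x(T), p(T))\<close>, and both claims follow from the positive homogeneity of \<open>H\<close> in \<open>p\<close> once
  \<open>H(x(T), \<xi>) \<ge> 0\<close> is known. This holds because the optimal trajectory stays outside \<open>S\<close> before
  time \<open>T\<close>: if \<open>H(x(T), \<xi>) < 0\<close>, it would reach \<open>x(T)\<close> moving against \<open>\<xi>\<close> at a linear rate,
  while the proximal normal inequality allows only a quadratic one.\<close>

section \<open>Absolute continuity\<close>

definition nonoverlapping_intervals :: "real \<Rightarrow> real \<Rightarrow> nat \<Rightarrow> (nat \<Rightarrow> real) \<Rightarrow> (nat \<Rightarrow> real) \<Rightarrow> bool" where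
  "nonoverlapping_intervals a b n u v \<longleftrightarrow>
     (\<forall>i<n. a \<le> u i \<and> u i \<le> v i \<and> v i \<le> b) \<and> (\<forall>i<n. \<forall>j<n. i \<noteq> j \<longrightarrow> v i \<le> u j \<or> v j \<le> u i)"

lemma abs_cont_on_iff:
  "abs_cont_on a b f \<longleftrightarrow>
     (\<forall>\<epsilon>>0. \<exists>\<delta>>0. \<forall>n u v. nonoverlapping_intervals a b n u v \<longrightarrow> (\<Sum>i<n. v i - u i) < \<delta> \<longrightarrow>
        (\<Sum>i<n. norm (f (v i) - f (u i))) < \<epsilon>)"
  unfolding abs_cont_on_def nonoverlapping_intervals_def by (simp only: imp_conjL conj_assoc)

lemma abs_cont_onE:
  assumes "abs_cont_on a b f" "\<epsilon> > 0"
  obtains \<delta> where "\<delta> > 0" "\<And>n u v. nonoverlapping_intervals a b n u v \<Longrightarrow> (\<Sum>i<n. v i - u i) < \<delta> \<Longrightarrow>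
      (\<Sum>i<n. norm (f (v i) - f (u i))) < \<epsilon>"
  using assms unfolding abs_cont_on_iff by blast

lemma nonoverlapping_intervals_mono:
  "nonoverlapping_intervals c d n u v \<Longrightarrow> a \<le> c \<Longrightarrow> d \<le> b \<Longrightarrow> nonoverlapping_intervals a b n u v"
  unfolding nonoverlapping_intervals_def by force

lemma nonoverlapping_intervals_reflect:
  "nonoverlapping_intervals (-b) (-a) n u v \<Longrightarrow> nonoverlapping_intervals a b n (\<lambda>i. - v i) (\<lambda>i. - u i)"
  unfolding nonoverlapping_intervals_def by force

lemma nonoverlapping_intervals_snoc:
  assumes "nonoverlapping_intervals a m n u v" "a \<le> m" "m \<le> s"
  shows "nonoverlapping_intervals a s (Suc n) (u(n := m)) (v(n := s))"
  using assms unfolding nonoverlapping_intervals_def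
  by (auto simp: less_Suc_eq)

lemma abs_cont_on_imp_continuous_on:
  assumes "abs_cont_on a b f"
  shows "continuous_on {a..b} f"
  unfolding continuous_on_iff
proof (intro ballI allI impI)
  fix t \<epsilon> :: real assume t: "t \<in> {a..b}" and "\<epsilon> > 0"
  then obtain \<delta> where "\<delta> > 0" and \<delta>: "\<And>n u v. nonoverlapping_intervals a b n u v \<Longrightarrow>
      (\<Sum>i<n. v i - u i) < \<delta> \<Longrightarrow> (\<Sum>i<n. norm (f (v i) - f (u i))) < \<epsilon>"
    using abs_cont_onE[OF assms \<open>\<epsilon> > 0\<close>] by blast
  have "dist (f s) (f t) < \<epsilon>" if s: "s \<in> {a..b}" "dist s t < \<delta>" for s
  proof -
    have "nonoverlapping_intervals a b (Suc 0) (\<lambda>_. min s t) (\<lambda>_. max s t)"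
      using s t unfolding nonoverlapping_intervals_def by auto
    moreover have "max s t - min s t < \<delta>" using s by (auto simp: dist_real_def)
    ultimately show ?thesis
      using \<delta>[of "Suc 0" "\<lambda>_. min s t" "\<lambda>_. max s t"]
      by (cases "s \<le> t") (auto simp: dist_norm norm_minus_commute)
  qed
  then show "\<exists>\<delta>>0. \<forall>s\<in>{a..b}. dist s t < \<delta> \<longrightarrow> dist (f s) (f t) < \<epsilon>"
    using \<open>\<delta> > 0\<close> by blast
qed

lemma abs_cont_on_subinterval:
  "abs_cont_on a b f \<Longrightarrow> a \<le> c \<Longrightarrow> d \<le> b \<Longrightarrow> abs_cont_on c d f"
  unfolding abs_cont_on_iff by (meson nonoverlapping_intervals_mono)

lemma abs_cont_on_reflect:
  assumes "abs_cont_on a b f"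
  shows "abs_cont_on (-b) (-a) (\<lambda>t. f (-t))"
  unfolding abs_cont_on_iff
proof (intro allI impI)
  fix \<epsilon> :: real assume "\<epsilon> > 0"
  then obtain \<delta> where "\<delta> > 0" and \<delta>: "\<And>n u v. nonoverlapping_intervals a b n u v \<Longrightarrow>
      (\<Sum>i<n. v i - u i) < \<delta> \<Longrightarrow> (\<Sum>i<n. norm (f (v i) - f (u i))) < \<epsilon>"
    using abs_cont_onE[OF assms \<open>\<epsilon> > 0\<close>] by blast
  have "(\<Sum>i<n. norm (f (- v i) - f (- u i))) < \<epsilon>"
    if "nonoverlapping_intervals (-b) (-a) n u v" "(\<Sum>i<n. v i - u i) < \<delta>" for n u v
    using \<delta>[OF nonoverlapping_intervals_reflect[OF that(1)]] that(2)
    by (simp add: norm_minus_commute sum_subtractf)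
  then show "\<exists>\<delta>>0. \<forall>n u v. nonoverlapping_intervals (-b) (-a) n u v \<longrightarrow> (\<Sum>i<n. v i - u i) < \<delta> \<longrightarrow>
      (\<Sum>i<n. norm (f (- v i) - f (- u i))) < \<epsilon>"
    using \<open>\<delta> > 0\<close> by blast
qed

lemma abs_cont_on_dominated:
  fixes g :: "real \<Rightarrow> 'c::real_normed_vector"
  assumes f1: "abs_cont_on a b f1" and f2: "abs_cont_on a b f2" and "C \<ge> 0"
    and dom: "\<And>u v. a \<le> u \<Longrightarrow> u \<le> v \<Longrightarrow> v \<le> b \<Longrightarrow>
      norm (g v - g u) \<le> C * (norm (f1 v - f1 u) + norm (f2 v - f2 u) + (v - u))"
  shows "abs_cont_on a b g"
  unfolding abs_cont_on_iff
proof (intro allI impI)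
  fix \<epsilon> :: real assume "\<epsilon> > 0"
  define \<epsilon>' where "\<epsilon>' = \<epsilon> / (3 * (C + 1))"
  have "\<epsilon>' > 0" using \<open>\<epsilon> > 0\<close> \<open>C \<ge> 0\<close> unfolding \<epsilon>'_def by simp
  obtain \<delta>1 where "\<delta>1 > 0" and \<delta>1: "\<And>n u v. nonoverlapping_intervals a b n u v \<Longrightarrow>
      (\<Sum>i<n. v i - u i) < \<delta>1 \<Longrightarrow> (\<Sum>i<n. norm (f1 (v i) - f1 (u i))) < \<epsilon>'"
    using abs_cont_onE[OF f1 \<open>\<epsilon>' > 0\<close>] by blast
  obtain \<delta>2 where "\<delta>2 > 0" and \<delta>2: "\<And>n u v. nonoverlapping_intervals a b n u v \<Longrightarrow>
      (\<Sum>i<n. v i - u i) < \<delta>2 \<Longrightarrow> (\<Sum>i<n. norm (f2 (v i) - f2 (u i))) < \<epsilon>'"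
    using abs_cont_onE[OF f2 \<open>\<epsilon>' > 0\<close>] by blast
  have "(\<Sum>i<n. norm (g (v i) - g (u i))) < \<epsilon>"
    if uv: "nonoverlapping_intervals a b n u v" and len: "(\<Sum>i<n. v i - u i) < min \<epsilon>' (min \<delta>1 \<delta>2)"
    for n u v
  proof -
    have "(\<Sum>i<n. norm (g (v i) - g (u i)))
        \<le> (\<Sum>i<n. C * (norm (f1 (v i) - f1 (u i)) + norm (f2 (v i) - f2 (u i)) + (v i - u i)))"
      using uv by (intro sum_mono dom) (auto simp: nonoverlapping_intervals_def)
    also have "\<dots> = C * ((\<Sum>i<n. norm (f1 (v i) - f1 (u i))) + (\<Sum>i<n. norm (f2 (v i) - f2 (u i)))
        + (\<Sum>i<n. v i - u i))"
      by (simp add: sum_distrib_left sum.distrib distrib_left)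
    also have "\<dots> \<le> C * (3 * \<epsilon>')"
      using \<delta>1[OF uv] \<delta>2[OF uv] len \<open>C \<ge> 0\<close> by (intro mult_left_mono) auto
    also have "\<dots> < \<epsilon>"
      using \<open>\<epsilon> > 0\<close> \<open>C \<ge> 0\<close> unfolding \<epsilon>'_def by (simp add: field_simps)
    finally show ?thesis .
  qed
  moreover have "min \<epsilon>' (min \<delta>1 \<delta>2) > 0" using \<open>\<epsilon>' > 0\<close> \<open>\<delta>1 > 0\<close> \<open>\<delta>2 > 0\<close> by simp
  ultimately show "\<exists>\<delta>>0. \<forall>n u v. nonoverlapping_intervals a b n u v \<longrightarrow> (\<Sum>i<n. v i - u i) < \<delta> \<longrightarrow>
      (\<Sum>i<n. norm (g (v i) - g (u i))) < \<epsilon>"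
    by blast
qed

lemma sum_interval_lengths_le_emeasure:
  assumes uv: "nonoverlapping_intervals a b n u v" and sub: "\<And>i. i < n \<Longrightarrow> {u i..v i} \<subseteq> U"
    and U: "U \<in> sets lebesgue"
  shows "ennreal (\<Sum>i<n. v i - u i) \<le> emeasure lebesgue U"
proof -
  have le: "u i \<le> v i" if "i < n" for i using uv that unfolding nonoverlapping_intervals_def by auto
  have "disjoint_family_on (\<lambda>i. {u i..<v i}) {..<n}"
    using uv unfolding disjoint_family_on_def nonoverlapping_intervals_def
    by (metis atLeastLessThan_iff disjoint_iff lessThan_iff not_le order.strict_trans1)
  then have "(\<Sum>i<n. emeasure lebesgue {u i..<v i}) = emeasure lebesgue (\<Union>i<n. {u i..<v i})"
    by (intro sum_emeasure) auto
  moreover have "(\<Sum>i<n. emeasure lebesgue {u i..<v i}) = (\<Sum>i<n. ennreal (v i - u i))"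
    using le by (intro sum.cong) auto
  moreover have "\<dots> = ennreal (\<Sum>i<n. v i - u i)"
    using le by (intro sum_ennreal) auto
  moreover have "(\<Union>i<n. {u i..<v i}) \<subseteq> U"
  proof (intro UN_least)
    fix i assume "i \<in> {..<n}"
    then show "{u i..<v i} \<subseteq> U" using sub[of i] atLeastLessThan_subseteq_atLeastAtMost_iff by blast
  qed
  then have "emeasure lebesgue (\<Union>i<n. {u i..<v i}) \<le> emeasure lebesgue U"
    using U by (intro emeasure_mono)
  ultimately show ?thesis by simp
qed

lemma abs_cont_on_small_variation_near_null_set:
  fixes g :: "real \<Rightarrow> 'b::real_normed_vector"
  assumes "abs_cont_on a b g" and N: "N \<in> null_sets lebesgue" and "\<epsilon> > 0"
  obtains U where "open U" "N \<subseteq> U" "\<And>n u v. nonoverlapping_intervals a b n u v \<Longrightarrow>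
    (\<forall>i<n. {u i..v i} \<subseteq> U) \<Longrightarrow> (\<Sum>i<n. norm (g (v i) - g (u i))) < \<epsilon>"
proof -
  obtain \<delta> where "\<delta> > 0" and \<delta>: "\<And>n u v. nonoverlapping_intervals a b n u v \<Longrightarrow>
      (\<Sum>i<n. v i - u i) < \<delta> \<Longrightarrow> (\<Sum>i<n. norm (g (v i) - g (u i))) < \<epsilon>"
    using abs_cont_onE[OF assms(1) \<open>\<epsilon> > 0\<close>] by blast
  obtain U where "open U" "N \<subseteq> U" "U - N \<in> lmeasurable" and "emeasure lebesgue (U - N) < \<delta>"
    using sets_lebesgue_outer_open[OF null_setsD2[OF N] \<open>\<delta> > 0\<close>] by auto
  then have U: "U \<in> sets lebesgue" "emeasure lebesgue U < \<delta>"
    using N emeasure_Diff_null_set[of N lebesgue U] by (auto simp: borel_open)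
  have "(\<Sum>i<n. norm (g (v i) - g (u i))) < \<epsilon>"
    if uv: "nonoverlapping_intervals a b n u v" "\<forall>i<n. {u i..v i} \<subseteq> U" for n u v
  proof -
    have "ennreal (\<Sum>i<n. v i - u i) < \<delta>"
      using sum_interval_lengths_le_emeasure[OF uv(1) _ U(1)] uv(2) U(2) by (meson order.strict_trans1)
    then have "(\<Sum>i<n. v i - u i) < \<delta>"
      using \<open>\<delta> > 0\<close> ennreal_less_iff[of "\<Sum>i<n. v i - u i" \<delta>] by (cases "0 \<le> (\<Sum>i<n. v i - u i)") auto
    then show ?thesis using \<delta> uv(1) by blast
  qed
  then show thesis using that \<open>open U\<close> \<open>N \<subseteq> U\<close> by blast
qed

definition interval_variations :: "(real \<Rightarrow> 'b::real_normed_vector) \<Rightarrow> real set \<Rightarrow> real \<Rightarrow> real \<Rightarrow> real set" where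
  "interval_variations g U a s = {(\<Sum>i<n. norm (g (v i) - g (u i))) | n u v.
     nonoverlapping_intervals a s n u v \<and> (\<forall>i<n. {u i..v i} \<subseteq> U)}"

lemma zero_in_interval_variations: "0 \<in> interval_variations g U a s"
  unfolding interval_variations_def by (rule CollectI, rule exI[of _ 0]) (auto simp: nonoverlapping_intervals_def)

lemma interval_variations_mono: "s \<le> s' \<Longrightarrow> interval_variations g U a s \<subseteq> interval_variations g U a s'"
  unfolding interval_variations_def using nonoverlapping_intervals_mono[OF _ order_refl] by blast

lemma interval_variations_snoc:
  assumes "\<sigma> \<in> interval_variations g U a m" "a \<le> m" "m \<le> s" "{m..s} \<subseteq> U"
  shows "\<sigma> + norm (g s - g m) \<in> interval_variations g U a s"
proof -
  obtain n u v where uv: "nonoverlapping_intervals a m n u v" "\<forall>i<n. {u i..v i} \<subseteq> U"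
    and \<sigma>: "\<sigma> = (\<Sum>i<n. norm (g (v i) - g (u i)))"
    using assms(1) unfolding interval_variations_def by blast
  define u' v' where "u' = u(n := m)" and "v' = v(n := s)"
  have "nonoverlapping_intervals a s (Suc n) u' v'"
    unfolding u'_def v'_def by (rule nonoverlapping_intervals_snoc[OF uv(1) assms(2,3)])
  moreover have "\<forall>i<Suc n. {u' i..v' i} \<subseteq> U"
    using uv(2) assms(4) by (auto simp: less_Suc_eq u'_def v'_def)
  moreover have "\<sigma> + norm (g s - g m) = (\<Sum>i<Suc n. norm (g (v' i) - g (u' i)))"
    unfolding \<sigma> u'_def v'_def by simp
  ultimately show ?thesis unfolding interval_variations_def by blast
qed

lemma abs_cont_on_variation_near_null_set:
  fixes g :: "real \<Rightarrow> 'b::real_normed_vector"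
  assumes "abs_cont_on a b g" and "N \<in> null_sets lebesgue" and "\<epsilon> > 0"
  obtains U V where "open U" "N \<subseteq> U" "\<And>s. s \<le> b \<Longrightarrow> 0 \<le> V s \<and> V s \<le> \<epsilon>"
    "\<And>s s'. s \<le> s' \<Longrightarrow> s' \<le> b \<Longrightarrow> V s \<le> V s'"
    "\<And>m s. a \<le> m \<Longrightarrow> m \<le> s \<Longrightarrow> s \<le> b \<Longrightarrow> {m..s} \<subseteq> U \<Longrightarrow> V m + norm (g s - g m) \<le> V s"
proof -
  obtain U where "open U" "N \<subseteq> U" and small: "\<And>n u v. nonoverlapping_intervals a b n u v \<Longrightarrow>
      (\<forall>i<n. {u i..v i} \<subseteq> U) \<Longrightarrow> (\<Sum>i<n. norm (g (v i) - g (u i))) < \<epsilon>"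
    using abs_cont_on_small_variation_near_null_set[OF assms] by blast
  define V where "V s = Sup (interval_variations g U a s)" for s
  have less: "\<sigma> < \<epsilon>" if "s \<le> b" "\<sigma> \<in> interval_variations g U a s" for s \<sigma>
    using that(2) small nonoverlapping_intervals_mono[OF _ order_refl that(1)]
    unfolding interval_variations_def by blast
  have zero_in: "0 \<in> interval_variations g U a s" for s by (rule zero_in_interval_variations)
  then have ne: "interval_variations g U a s \<noteq> {}" for s by blast
  have bdd: "bdd_above (interval_variations g U a s)" if "s \<le> b" for s
    using less[OF that] by (meson bdd_above.I less_imp_le)
  show thesis
  proof
    show "0 \<le> V s \<and> V s \<le> \<epsilon>" if "s \<le> b" for s
    proof
      show "0 \<le> V s" unfolding V_def by (rule cSup_upper[OF zero_in bdd[OF that]])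
      show "V s \<le> \<epsilon>" unfolding V_def using less[OF that] by (intro cSup_least[OF ne] less_imp_le)
    qed
    show "V s \<le> V s'" if "s \<le> s'" "s' \<le> b" for s s'
      unfolding V_def by (rule cSup_subset_mono[OF ne bdd[OF that(2)] interval_variations_mono[OF that(1)]])
    show "V m + norm (g s - g m) \<le> V s" if "a \<le> m" "m \<le> s" "s \<le> b" "{m..s} \<subseteq> U" for m s
    proof -
      have "\<sigma> \<le> V s - norm (g s - g m)" if "\<sigma> \<in> interval_variations g U a m" for \<sigma>
        using cSup_upper[OF interval_variations_snoc[OF that \<open>a \<le> m\<close> \<open>m \<le> s\<close> \<open>{m..s} \<subseteq> U\<close>] bdd]
          \<open>s \<le> b\<close> by (simp add: V_def)
      then have "V m \<le> V s - norm (g s - g m)"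
        unfolding V_def[of m] by (rule cSup_least[OF ne])
      then show ?thesis by simp
    qed
  qed fact+
qed

lemma real_interval_induct:
  fixes a b :: real
  assumes "a \<le> b" "P a"
    and limit: "\<And>m. a < m \<Longrightarrow> m \<le> b \<Longrightarrow> (\<And>r. a \<le> r \<Longrightarrow> r < m \<Longrightarrow> P r) \<Longrightarrow> P m"
    and step: "\<And>m. a \<le> m \<Longrightarrow> m < b \<Longrightarrow> P m \<Longrightarrow> \<exists>d>0. \<forall>s. m < s \<and> s < m + d \<and> s \<le> b \<longrightarrow> P s"
  shows "P b"
proof -
  define K where "K = {s \<in> {a..b}. \<forall>r\<in>{a..s}. P r}"
  define m where "m = Sup K"
  have "a \<in> K" using assms(1,2) by (auto simp: K_def)
  have bdd: "bdd_above K" unfolding K_def by (rule bdd_aboveI[of _ b]) auto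
  have "a \<le> m" unfolding m_def by (rule cSup_upper[OF \<open>a \<in> K\<close> bdd])
  moreover have "m \<le> b" unfolding m_def using \<open>a \<in> K\<close> by (intro cSup_least) (auto simp: K_def)
  ultimately have m: "a \<le> m" "m \<le> b" .
  have below: "P r" if "a \<le> r" "r < m" for r
  proof -
    obtain k where "k \<in> K" "r < k" using less_cSupE[of r K] \<open>r < m\<close> \<open>a \<in> K\<close> unfolding m_def by blast
    then show ?thesis using \<open>a \<le> r\<close> by (auto simp: K_def)
  qed
  have "P m"
  proof (cases "m = a")
    case True then show ?thesis using \<open>P a\<close> by simp
  next
    case False
    with m have "a < m" by simp
    from this \<open>m \<le> b\<close> below show ?thesis by (rule limit)
  qed
  then have "m \<in> K" using m below by (auto simp: K_def le_less)
  have "\<not> m < b"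
  proof
    assume "m < b"
    then obtain d where "d > 0" and d: "\<forall>s. m < s \<and> s < m + d \<and> s \<le> b \<longrightarrow> P s"
      using step[OF m(1) \<open>m < b\<close> \<open>P m\<close>] by blast
    define s where "s = min (m + d/2) b"
    have "s \<in> K"
      unfolding K_def
    proof (intro CollectI conjI ballI)
      show "s \<in> {a..b}" using m \<open>d > 0\<close> \<open>m < b\<close> by (auto simp: s_def)
      fix r assume "r \<in> {a..s}"
      show "P r"
      proof (cases "r \<le> m")
        case True then show ?thesis using \<open>m \<in> K\<close> \<open>r \<in> {a..s}\<close> by (auto simp: K_def)
      next
        case False then show ?thesis using d \<open>r \<in> {a..s}\<close> \<open>d > 0\<close> by (auto simp: s_def)
      qed
    qed
    then have "s \<le> m" unfolding m_def using bdd by (rule cSup_upper)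
    then show False using \<open>d > 0\<close> \<open>m < b\<close> by (simp add: s_def)
  qed
  then show ?thesis using \<open>P m\<close> m by simp
qed

lemma continuous_on_ge_if_ge_on_left:
  fixes g :: "real \<Rightarrow> real"
  assumes "continuous_on {a..b} g" "a < m" "m \<le> b" and below: "\<And>r. a \<le> r \<Longrightarrow> r < m \<Longrightarrow> c \<le> g r"
  shows "c \<le> g m"
proof -
  have "(g \<longlongrightarrow> g m) (at m within {a..<m})"
    using assms(1-3) by (metis atLeastAtMost_iff atLeastLessThan_subseteq_atLeastAtMost_iff continuous_on_def
        less_imp_le order_refl tendsto_within_subset)
  then show ?thesis
    using \<open>a < m\<close> below by (intro tendsto_lowerbound[where F = "at m within {a..<m}"])
      (auto simp: eventually_at_filter trivial_limit_within)
qed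

text \<open>Real induction on \<open>g a - e (s - a) - V s \<le> g s\<close>: at points of \<open>N\<close> the variation \<open>V\<close> of
  Lemma \<open>abs_cont_on_variation_near_null_set\<close> pays for any decrease of \<open>g\<close>.\<close>

lemma abs_cont_on_right_Dini_nonneg_approx:
  fixes g :: "real \<Rightarrow> real"
  assumes ac: "abs_cont_on a b g" and "a \<le> b" and N: "N \<in> null_sets lebesgue"
    and right: "\<And>t \<epsilon>. t \<in> {a..<b} - N \<Longrightarrow> \<epsilon> > 0 \<Longrightarrow>
      \<exists>d>0. \<forall>s. t < s \<and> s < t + d \<and> s \<le> b \<longrightarrow> g t - \<epsilon> * (s - t) \<le> g s"
    and "e > 0"
  shows "g a - e * (b - a) - e \<le> g b"
proof -
  obtain U V where "open U" "N \<subseteq> U" and V: "\<And>s. s \<le> b \<Longrightarrow> 0 \<le> V s \<and> V s \<le> e"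
    and V_mono: "\<And>s s'. s \<le> s' \<Longrightarrow> s' \<le> b \<Longrightarrow> V s \<le> V s'"
    and V_add: "\<And>m s. a \<le> m \<Longrightarrow> m \<le> s \<Longrightarrow> s \<le> b \<Longrightarrow> {m..s} \<subseteq> U \<Longrightarrow> V m + norm (g s - g m) \<le> V s"
    using abs_cont_on_variation_near_null_set[OF ac N \<open>e > 0\<close>] by blast
  define Q where "Q s \<longleftrightarrow> g a - e * (s - a) - V s \<le> g s" for s
  have "Q b"
  proof (rule real_interval_induct[of a b Q])
    show "a \<le> b" "Q a" using \<open>a \<le> b\<close> V[of a] by (auto simp: Q_def)
  next
    fix m assume "a < m" "m \<le> b" and below: "\<And>r. a \<le> r \<Longrightarrow> r < m \<Longrightarrow> Q r"
    have "g a - e * (m - a) - V m \<le> g r" if "a \<le> r" "r < m" for r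
    proof -
      have "e * (r - a) \<le> e * (m - a)" using that \<open>e > 0\<close> by (intro mult_left_mono) auto
      then show ?thesis using below[OF that] V_mono[of r m] that \<open>m \<le> b\<close> by (auto simp: Q_def)
    qed
    then show "Q m" unfolding Q_def
      by (rule continuous_on_ge_if_ge_on_left[OF abs_cont_on_imp_continuous_on[OF ac] \<open>a < m\<close> \<open>m \<le> b\<close>])
  next
    fix m assume "a \<le> m" "m < b" "Q m"
    show "\<exists>d>0. \<forall>s. m < s \<and> s < m + d \<and> s \<le> b \<longrightarrow> Q s"
    proof (cases "m \<in> N")
      case False
      then obtain d where "d > 0" and d: "\<forall>s. m < s \<and> s < m + d \<and> s \<le> b \<longrightarrow> g m - e * (s - m) \<le> g s"
        using right[of m e] \<open>a \<le> m\<close> \<open>m < b\<close> \<open>e > 0\<close> by auto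
      have "Q s" if "m < s" "s < m + d" "s \<le> b" for s
        using d that V_mono[of m s] \<open>Q m\<close> by (auto simp: Q_def algebra_simps)
      then show ?thesis using \<open>d > 0\<close> by blast
    next
      case True
      then obtain r where "r > 0" "ball m r \<subseteq> U" using \<open>open U\<close> \<open>N \<subseteq> U\<close> open_contains_ball by blast
      have "Q s" if "m < s" "s < m + r" "s \<le> b" for s
      proof -
        have "{m..s} \<subseteq> U" using that \<open>ball m r \<subseteq> U\<close> by (auto simp: dist_real_def)
        then have "V m + \<bar>g s - g m\<bar> \<le> V s" using V_add[of m s] \<open>a \<le> m\<close> that by simp
        moreover have "e * (m - a) \<le> e * (s - a)" using that \<open>e > 0\<close> by (intro mult_left_mono) auto
        ultimately show ?thesis using \<open>Q m\<close> by (auto simp: Q_def)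
      qed
      then show ?thesis using \<open>r > 0\<close> by blast
    qed
  qed
  then show ?thesis using V[of b] by (auto simp: Q_def)
qed

lemma abs_cont_on_le_if_right_Dini_nonneg:
  fixes g :: "real \<Rightarrow> real"
  assumes "abs_cont_on a b g" and "a \<le> b" and "N \<in> null_sets lebesgue"
    and "\<And>t \<epsilon>. t \<in> {a..<b} - N \<Longrightarrow> \<epsilon> > 0 \<Longrightarrow>
      \<exists>d>0. \<forall>s. t < s \<and> s < t + d \<and> s \<le> b \<longrightarrow> g t - \<epsilon> * (s - t) \<le> g s"
  shows "g a \<le> g b"
proof (rule field_le_epsilon)
  fix \<epsilon> :: real assume "\<epsilon> > 0"
  define e where "e = \<epsilon> / (b - a + 1)"
  have "e > 0" using \<open>\<epsilon> > 0\<close> \<open>a \<le> b\<close> by (simp add: e_def)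
  have "e * (b - a) + e = e * (b - a + 1)" by (simp add: algebra_simps)
  also have "\<dots> = \<epsilon>" using \<open>a \<le> b\<close> by (simp add: e_def)
  finally show "g a \<le> g b + \<epsilon>" using abs_cont_on_right_Dini_nonneg_approx[OF assms \<open>e > 0\<close>] by simp
qed

lemma null_sets_lebesgue_uminus_image:
  "N \<in> null_sets lebesgue \<Longrightarrow> uminus ` N \<in> null_sets (lebesgue :: real measure)"
  by (simp add: negligible_iff_null_sets[symmetric] negligible_differentiable_image_negligible
      differentiable_on_def)

lemma abs_cont_on_ge_if_left_Dini_nonpos:
  fixes g :: "real \<Rightarrow> real"
  assumes ac: "abs_cont_on a b g" and "a \<le> b" and N: "N \<in> null_sets lebesgue"
    and left: "\<And>t \<epsilon>. t \<in> {a<..b} - N \<Longrightarrow> \<epsilon> > 0 \<Longrightarrow>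
      \<exists>d>0. \<forall>s. t - d < s \<and> s < t \<and> a \<le> s \<longrightarrow> g t - \<epsilon> * (t - s) \<le> g s"
  shows "g b \<le> g a"
proof -
  have "g (- (- b)) \<le> g (- (- a))"
  proof (rule abs_cont_on_le_if_right_Dini_nonneg[OF abs_cont_on_reflect[OF ac] _
        null_sets_lebesgue_uminus_image[OF N]])
    show "- b \<le> - a" using \<open>a \<le> b\<close> by simp
    fix t \<epsilon> :: real assume "t \<in> {- b..<- a} - uminus ` N" "\<epsilon> > 0"
    then have "- t \<in> {a<..b} - N" by (auto simp: image_iff)
    then obtain d where "d > 0" and d: "\<forall>s. - t - d < s \<and> s < - t \<and> a \<le> s \<longrightarrow> g (- t) - \<epsilon> * (- t - s) \<le> g s"
      using left \<open>\<epsilon> > 0\<close> by blast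
    have "g (- t) - \<epsilon> * (s - t) \<le> g (- s)" if "t < s \<and> s < t + d \<and> s \<le> - a" for s
      using d[rule_format, of "- s"] that by auto
    then show "\<exists>d>0. \<forall>s. t < s \<and> s < t + d \<and> s \<le> - a \<longrightarrow> g (- t) - \<epsilon> * (s - t) \<le> g (- s)"
      using \<open>d > 0\<close> by blast
  qed
  then show ?thesis by simp
qed

text \<open>Relative to \<open>T\<close>, the lower right Dini derivative of \<open>g\<close> at \<open>t\<close> is nonnegative and the upper
  left one is nonpositive.\<close>

definition dini_stationary :: "(real \<Rightarrow> real) \<Rightarrow> real set \<Rightarrow> real \<Rightarrow> bool" where
  "dini_stationary g T t \<longleftrightarrow> (\<forall>\<epsilon>>0. \<exists>d>0. \<forall>s\<in>T. \<bar>s - t\<bar> < d \<longrightarrow> g t - \<epsilon> * \<bar>s - t\<bar> \<le> g s)"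

lemma abs_cont_on_constant_if_dini_stationary:
  assumes ac: "abs_cont_on a b g" and N: "N \<in> null_sets lebesgue"
    and stat: "\<And>t. t \<in> {a..b} - N \<Longrightarrow> dini_stationary g {a..b} t" and t: "t \<in> {a..b}"
  shows "g t = g b"
proof (rule antisym)
  have ac': "abs_cont_on t b g" using abs_cont_on_subinterval[OF ac] t by simp
  have near: "\<exists>d>0. \<forall>s\<in>{a..b}. \<bar>s - t'\<bar> < d \<longrightarrow> g t' - \<epsilon> * \<bar>s - t'\<bar> \<le> g s"
    if "t' \<in> {t..b} - N" "\<epsilon> > 0" for t' \<epsilon>
    using stat[of t'] that t unfolding dini_stationary_def by auto
  show "g t \<le> g b"
  proof (rule abs_cont_on_le_if_right_Dini_nonneg[OF ac' _ N])
    fix t' \<epsilon> :: real assume "t' \<in> {t..<b} - N" "\<epsilon> > 0"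
    then obtain d where "d > 0" and d: "\<forall>s\<in>{a..b}. \<bar>s - t'\<bar> < d \<longrightarrow> g t' - \<epsilon> * \<bar>s - t'\<bar> \<le> g s"
      using near[of t' \<epsilon>] by auto
    have "g t' - \<epsilon> * (s - t') \<le> g s" if "t' < s \<and> s < t' + d \<and> s \<le> b" for s
      using d[rule_format, of s] that t \<open>t' \<in> {t..<b} - N\<close> by auto
    then show "\<exists>d>0. \<forall>s. t' < s \<and> s < t' + d \<and> s \<le> b \<longrightarrow> g t' - \<epsilon> * (s - t') \<le> g s"
      using \<open>d > 0\<close> by blast
  qed (use t in auto)
  show "g b \<le> g t"
  proof (rule abs_cont_on_ge_if_left_Dini_nonpos[OF ac' _ N])
    fix t' \<epsilon> :: real assume "t' \<in> {t<..b} - N" "\<epsilon> > 0"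
    then obtain d where "d > 0" and d: "\<forall>s\<in>{a..b}. \<bar>s - t'\<bar> < d \<longrightarrow> g t' - \<epsilon> * \<bar>s - t'\<bar> \<le> g s"
      using near[of t' \<epsilon>] by auto
    have "g t' - \<epsilon> * (t' - s) \<le> g s" if "t' - d < s \<and> s < t' \<and> t \<le> s" for s
      using d[rule_format, of s] that t \<open>t' \<in> {t<..b} - N\<close> by auto
    then show "\<exists>d>0. \<forall>s. t' - d < s \<and> s < t' \<and> t \<le> s \<longrightarrow> g t' - \<epsilon> * (t' - s) \<le> g s"
      using \<open>d > 0\<close> by blast
  qed (use t in auto)
qed

lemma abs_cont_on_mono_if_deriv_nonneg:
  fixes f :: "real \<Rightarrow> real"
  assumes ac: "abs_cont_on a b f" and "a \<le> b" and N: "N \<in> null_sets lebesgue"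
    and deriv: "\<And>t. t \<in> {a..<b} - N \<Longrightarrow> \<exists>D\<ge>0. (f has_real_derivative D) (at t within {a..b})"
  shows "f a \<le> f b"
proof (rule abs_cont_on_le_if_right_Dini_nonneg[OF ac \<open>a \<le> b\<close> N])
  fix t \<epsilon> :: real assume t: "t \<in> {a..<b} - N" and "\<epsilon> > 0"
  obtain D where "D \<ge> 0" and "(f has_derivative (\<lambda>h. h * D)) (at t within {a..b})"
    using deriv[OF t] by (auto simp: has_field_derivative_def mult.commute)
  then obtain d where "d > 0"
    and d: "\<forall>s\<in>{a..b}. norm (s - t) < d \<longrightarrow> norm (f s - f t - (s - t) * D) \<le> \<epsilon> * norm (s - t)"
    using \<open>\<epsilon> > 0\<close> unfolding has_derivative_within_alt by blast
  have "f t - \<epsilon> * (s - t) \<le> f s" if "t < s \<and> s < t + d \<and> s \<le> b" for s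
  proof -
    have "\<bar>f s - f t - (s - t) * D\<bar> \<le> \<epsilon> * (s - t)" using d[rule_format, of s] that t by auto
    moreover have "(s - t) * D \<ge> 0" using that \<open>D \<ge> 0\<close> by simp
    ultimately show ?thesis by (simp add: abs_le_iff)
  qed
  then show "\<exists>d>0. \<forall>s. t < s \<and> s < t + d \<and> s \<le> b \<longrightarrow> f t - \<epsilon> * (s - t) \<le> f s"
    using \<open>d > 0\<close> by blast
qed

lemma abs_cont_on_inner_increment_le:
  fixes x :: "real \<Rightarrow> 'a::real_inner"
  assumes ac: "abs_cont_on a b x" and "a \<le> b" and N: "N \<in> null_sets lebesgue"
    and deriv: "\<And>t. t \<in> {a..<b} - N \<Longrightarrow> \<exists>d. (x has_vector_derivative d) (at t within {a..b}) \<and> w \<bullet> d \<le> K"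
  shows "w \<bullet> (x b - x a) \<le> K * (b - a)"
proof -
  define f where "f s = K * s - w \<bullet> x s" for s
  have "abs_cont_on a b f"
  proof (rule abs_cont_on_dominated[OF ac ac])
    fix u v assume "a \<le> u" "u \<le> v" "v \<le> b"
    have "f v - f u = K * (v - u) - w \<bullet> (x v - x u)" by (simp add: f_def algebra_simps inner_diff_right)
    then have "norm (f v - f u) \<le> \<bar>K\<bar> * (v - u) + \<bar>w \<bullet> (x v - x u)\<bar>"
      using abs_triangle_ineq4[of "K * (v - u)" "w \<bullet> (x v - x u)"] \<open>u \<le> v\<close> by (simp add: abs_mult)
    also have "\<dots> \<le> \<bar>K\<bar> * (v - u) + norm w * norm (x v - x u)"
      using Cauchy_Schwarz_ineq2 by simp
    also have "\<dots> \<le> (\<bar>K\<bar> + norm w) * (norm (x v - x u) + norm (x v - x u) + (v - u))"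
    proof -
      have "0 \<le> \<bar>K\<bar> * (2 * norm (x v - x u)) + norm w * (norm (x v - x u) + (v - u))"
        using \<open>u \<le> v\<close> by simp
      then show ?thesis by (simp add: algebra_simps)
    qed
    finally show "norm (f v - f u) \<le> (\<bar>K\<bar> + norm w) * (norm (x v - x u) + norm (x v - x u) + (v - u))" .
  qed simp
  moreover have "\<exists>D\<ge>0. (f has_real_derivative D) (at t within {a..b})" if t: "t \<in> {a..<b} - N" for t
  proof -
    obtain d where d: "(x has_vector_derivative d) (at t within {a..b})" "w \<bullet> d \<le> K"
      using deriv[OF t] by blast
    have "(f has_derivative (\<lambda>h. K * h - w \<bullet> (h *\<^sub>R d))) (at t within {a..b})"
      unfolding f_def by (intro derivative_intros d(1)[unfolded has_vector_derivative_def])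
    moreover have "(\<lambda>h. K * h - w \<bullet> (h *\<^sub>R d)) = (*) (K - w \<bullet> d)" by (auto simp: fun_eq_iff algebra_simps)
    ultimately have "(f has_real_derivative K - w \<bullet> d) (at t within {a..b})"
      by (simp add: has_field_derivative_def)
    then show ?thesis using d(2) by (intro exI[of _ "K - w \<bullet> d"]) auto
  qed
  ultimately have "f a \<le> f b" using abs_cont_on_mono_if_deriv_nonneg \<open>a \<le> b\<close> N by blast
  then show ?thesis by (simp add: f_def algebra_simps inner_diff_right)
qed

section \<open>Semiconvex functions and Clarke subgradients\<close>

lemma continuous_midpoint_convex_le_chord:
  fixes \<phi> :: "real \<Rightarrow> real"
  assumes cont: "continuous_on {0..1} \<phi>"
    and mid: "\<And>s t. s \<in> {0..1} \<Longrightarrow> t \<in> {0..1} \<Longrightarrow> \<phi> ((s + t) / 2) \<le> (\<phi> s + \<phi> t) / 2"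
    and t: "t \<in> {0..1}"
  shows "\<phi> t \<le> (1 - t) * \<phi> 0 + t * \<phi> 1"
proof (rule ccontr)
  assume chord_violated: "\<not> ?thesis"
  define \<psi> where "\<psi> s = \<phi> s - ((1 - s) * \<phi> 0 + s * \<phi> 1)" for s
  have \<psi>_cont: "continuous_on {0..1} \<psi>" unfolding \<psi>_def by (intro continuous_intros cont)
  have \<psi>_mid: "\<psi> ((s + u) / 2) \<le> (\<psi> s + \<psi> u) / 2" if "s \<in> {0..1}" "u \<in> {0..1}" for s u
    using mid[OF that] unfolding \<psi>_def by (simp add: field_simps)
  obtain tm where tm: "tm \<in> {0..1}" "\<forall>s\<in>{0..1}. \<psi> s \<le> \<psi> tm"
    using continuous_attains_sup[OF compact_Icc _ \<psi>_cont] by auto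
  define M where "M = \<psi> tm"
  have "M > 0" using tm(2) t chord_violated unfolding M_def \<psi>_def by force
  text \<open>The leftmost maximiser \<open>t0\<close> of \<open>\<psi>\<close> violates midpoint convexity.\<close>
  define A where "A = {s \<in> {0..1}. \<psi> s = M}"
  have "closed A" unfolding A_def by (rule continuous_closed_preimage_constant[OF \<psi>_cont closed_atLeastAtMost])
  then have "compact ({0..1} \<inter> A)" by (rule compact_Int_closed[OF compact_Icc])
  moreover have "{0..1} \<inter> A = A" by (auto simp: A_def)
  ultimately have "compact A" by simp
  moreover have "tm \<in> A" using tm unfolding A_def M_def by auto
  ultimately obtain t0 where t0: "t0 \<in> A" "\<forall>s\<in>A. t0 \<le> s"
    using compact_attains_inf[of A] by blast
  have "\<psi> 0 = 0" "\<psi> 1 = 0" unfolding \<psi>_def by simp_all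
  then have "0 < t0" "t0 < 1" using t0(1) \<open>M > 0\<close> by (auto simp: A_def le_less)
  define r where "r = min t0 (1 - t0)"
  have r: "r > 0" "t0 - r \<in> {0..1}" "t0 + r \<in> {0..1}"
    using \<open>0 < t0\<close> \<open>t0 < 1\<close> unfolding r_def by auto
  have "\<psi> (t0 - r) \<noteq> M"
  proof
    assume "\<psi> (t0 - r) = M"
    then have "t0 - r \<in> A" using r(2) by (simp add: A_def)
    then show False using t0(2) \<open>r > 0\<close> by force
  qed
  moreover have "\<psi> (t0 - r) \<le> M" using tm(2) r(2) unfolding M_def by blast
  ultimately have "\<psi> (t0 - r) < M" by simp
  moreover have "\<psi> (t0 + r) \<le> M" using tm(2) r(3) unfolding M_def by auto
  moreover have "\<psi> t0 \<le> (\<psi> (t0 - r) + \<psi> (t0 + r)) / 2" using \<psi>_mid[OF r(2,3)] by simp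
  ultimately show False using t0(1) unfolding A_def by simp
qed

lemma continuous_midpoint_convex_imp_convex_on:
  fixes k :: "'a::real_normed_vector \<Rightarrow> real"
  assumes cont: "continuous_on UNIV k" and mid: "\<And>z1 z2. k ((z1 + z2) /\<^sub>R 2) \<le> (k z1 + k z2) / 2"
  shows "convex_on UNIV k"
proof (rule convex_onI)
  fix t :: real and y z :: 'a assume "0 < t" "t < 1"
  define \<phi> where "\<phi> s = k (y + s *\<^sub>R (z - y))" for s
  have "continuous_on {0..1} \<phi>"
    unfolding \<phi>_def by (intro continuous_on_compose2[OF cont] continuous_intros) auto
  moreover have "\<phi> ((s + u) / 2) \<le> (\<phi> s + \<phi> u) / 2" for s u
  proof -
    have half: "(2 * s + 2 * u) / 2 = s + u" by simp
    have "(y + s *\<^sub>R (z - y)) + (y + u *\<^sub>R (z - y)) = (2::real) *\<^sub>R (y + ((s + u) / 2) *\<^sub>R (z - y))"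
      by (simp add: scaleR_add_right scaleR_add_left scaleR_2 add_ac half)
    then show ?thesis unfolding \<phi>_def using mid[of "y + s *\<^sub>R (z - y)" "y + u *\<^sub>R (z - y)"] by simp
  qed
  ultimately have "\<phi> t \<le> (1 - t) * \<phi> 0 + t * \<phi> 1"
    using \<open>0 < t\<close> \<open>t < 1\<close> by (intro continuous_midpoint_convex_le_chord) auto
  moreover have "(1 - t) *\<^sub>R y + t *\<^sub>R z = y + t *\<^sub>R (z - y)" by (simp add: algebra_simps)
  ultimately show "k ((1 - t) *\<^sub>R y + t *\<^sub>R z) \<le> (1 - t) * k y + t * k z" by (simp add: \<phi>_def)
qed simp

lemma semiconvex_with_imp_convex_on:
  fixes h :: "'a::euclidean_space \<Rightarrow> real"
  assumes "semiconvex_with c h"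
  shows "convex_on UNIV (\<lambda>z. h z + c * (norm z)\<^sup>2)"
proof (rule continuous_midpoint_convex_imp_convex_on)
  have "continuous_on UNIV (\<lambda>z. - h z)" using assms unfolding semiconvex_with_def by blast
  from continuous_on_minus[OF this] have "continuous_on UNIV h" by simp
  then show "continuous_on UNIV (\<lambda>z. h z + c * (norm z)\<^sup>2)" by (auto intro!: continuous_intros)
  fix z1 z2 :: 'a
  have mid_norm: "(norm ((z1 + z2) /\<^sub>R 2))\<^sup>2 = ((norm z1)\<^sup>2 + (norm z2)\<^sup>2) / 2 - (norm (z1 - z2))\<^sup>2 / 4"
    by (simp add: power2_norm_eq_inner inner_add_left inner_add_right inner_diff_left
        inner_diff_right inner_commute field_simps)
  have "c * (norm ((z1 + z2) /\<^sub>R 2))\<^sup>2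
      = (c * (norm z1)\<^sup>2 + c * (norm z2)\<^sup>2) / 2 - c / 4 * (norm (z1 - z2))\<^sup>2"
    unfolding mid_norm by (simp add: algebra_simps)
  moreover have "(- h z1 - h z2) / 2 + h ((z1 + z2) /\<^sub>R 2) \<le> c / 4 * (norm (z1 - z2))\<^sup>2"
    using assms unfolding semiconvex_with_def by blast
  ultimately show "h ((z1 + z2) /\<^sub>R 2) + c * (norm ((z1 + z2) /\<^sub>R 2))\<^sup>2
      \<le> (h z1 + c * (norm z1)\<^sup>2 + (h z2 + c * (norm z2)\<^sup>2)) / 2"
    by argo
qed

lemma clarke_dd_le_if_quotient_le:
  fixes h :: "'a::euclidean_space \<Rightarrow> real"
  assumes "\<forall>\<^sub>F (z, t) in nhds x \<times>\<^sub>F at_right 0. (h (z + t *\<^sub>R v) - h z) / t \<le> R z t"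
    and "((\<lambda>(z, t). R z t) \<longlongrightarrow> r) (nhds x \<times>\<^sub>F at_right 0)"
  shows "clarke_dd h x v \<le> ereal r"
proof -
  have "clarke_dd h x v \<le> Limsup (nhds x \<times>\<^sub>F at_right 0) (\<lambda>(z, t). ereal (R z t))"
    unfolding clarke_dd_def using assms(1) by (intro Limsup_mono) (simp add: case_prod_beta')
  also have "\<dots> = ereal r"
    using assms(2) by (intro lim_imp_Limsup) (simp_all add: prod_filter_eq_bot case_prod_beta')
  finally show ?thesis .
qed

lemma semiconvex_clarke_subgradient_ineq:
  fixes h :: "'a::euclidean_space \<Rightarrow> real"
  assumes sc: "semiconvex_with c h" and \<zeta>: "\<zeta> \<in> clarke_grad h x"
  shows "h x + \<zeta> \<bullet> (y - x) - c * (norm (y - x))\<^sup>2 \<le> h y"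
proof -
  define k where "k z = h z + c * (norm z)\<^sup>2" for z
  have k_convex: "convex_on UNIV k" unfolding k_def by (rule semiconvex_with_imp_convex_on[OF sc])
  then have k_cont: "isCont k z" for z
    by (metis continuous_on_eq_continuous_at convex_on_continuous open_UNIV UNIV_I)
  define v where "v = y - x"
  define R where "R z t = k (z + v) - k z - c * (2 * (z \<bullet> v) + t * (norm v)\<^sup>2)" for z t
  have quotient_le: "(h (z + t *\<^sub>R v) - h z) / t \<le> R z t" if "0 < t" "t \<le> 1" for z t
  proof -
    have "k (z + t *\<^sub>R v) \<le> (1 - t) * k z + t * k (z + v)"
      using convex_onD[OF k_convex, of t z "z + v"] that by (simp add: algebra_simps)
    moreover have "(norm (z + t *\<^sub>R v))\<^sup>2 = (norm z)\<^sup>2 + t * (2 * (z \<bullet> v) + t * (norm v)\<^sup>2)"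
      unfolding power2_norm_eq_inner by (simp add: inner_add_left inner_add_right inner_commute algebra_simps)
    ultimately have "h (z + t *\<^sub>R v) - h z \<le> t * R z t"
      unfolding R_def k_def by (simp add: algebra_simps)
    then show ?thesis using that by (simp add: divide_le_eq mult.commute)
  qed
  let ?F = "nhds x \<times>\<^sub>F at_right (0::real)"
  have "\<forall>\<^sub>F t in at_right (0::real). 0 < t \<and> t \<le> 1"
    unfolding eventually_at_right_field by (rule exI[of _ 1]) auto
  then have "\<forall>\<^sub>F (z, t) in ?F. 0 < t \<and> t \<le> 1" by (subst eventually_prod2) auto
  then have ev: "\<forall>\<^sub>F (z, t) in ?F. (h (z + t *\<^sub>R v) - h z) / t \<le> R z t"
    by eventually_elim (use quotient_le in auto)
  have fst: "(fst \<longlongrightarrow> x) ?F" by (rule filterlim_fst)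
  have snd: "(snd \<longlongrightarrow> 0) ?F"
    using filterlim_snd[of "at_right (0::real)" "nhds x"] by (metis filterlim_mono order_refl at_within_le_nhds)
  have lim: "((\<lambda>(z, t). R z t) \<longlongrightarrow> R x 0) ?F"
    unfolding R_def case_prod_beta' by (intro tendsto_intros isCont_tendsto_compose[OF k_cont] fst snd)
  have "ereal (\<zeta> \<bullet> v) \<le> clarke_dd h x v" using \<zeta> unfolding clarke_grad_def by blast
  also have "\<dots> \<le> ereal (R x 0)" by (rule clarke_dd_le_if_quotient_le[OF ev lim])
  finally have "\<zeta> \<bullet> v \<le> R x 0" by simp
  moreover have "(norm y)\<^sup>2 = (norm x)\<^sup>2 + 2 * (x \<bullet> v) + (norm v)\<^sup>2"
    unfolding v_def power2_norm_eq_inner by (simp add: inner_diff_left inner_diff_right inner_commute)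
  ultimately show ?thesis unfolding R_def k_def v_def by (simp add: algebra_simps)
qed

section \<open>Trajectories and the minimum time\<close>

lemma trajectory_restrict:
  assumes "trajectory F \<tau> x" "0 \<le> s" "s \<le> \<tau>"
  shows "trajectory F s x"
proof -
  obtain N where "N \<in> null_sets lebesgue"
    and N: "\<forall>t\<in>{0..\<tau>} - N. \<exists>d. (x has_vector_derivative d) (at t within {0..\<tau>}) \<and> d \<in> F (x t)"
    using assms(1) unfolding trajectory_def by blast
  moreover have "abs_cont_on 0 s x"
    using assms abs_cont_on_subinterval unfolding trajectory_def by blast
  moreover have "\<exists>d. (x has_vector_derivative d) (at t within {0..s}) \<and> d \<in> F (x t)" if "t \<in> {0..s} - N" for t
    using N that assms(3) by (force intro: has_vector_derivative_within_subset)
  ultimately show ?thesis unfolding trajectory_def by blast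
qed

lemma trajectory_inner_increment_le:
  assumes "trajectory F \<tau> x" "0 \<le> s" "s \<le> \<tau>"
    and bound: "\<And>t v. t \<in> {s..\<tau>} \<Longrightarrow> v \<in> F (x t) \<Longrightarrow> w \<bullet> v \<le> K"
  shows "w \<bullet> (x \<tau> - x s) \<le> K * (\<tau> - s)"
proof -
  obtain N where "N \<in> null_sets lebesgue"
    and N: "\<forall>t\<in>{0..\<tau>} - N. \<exists>d. (x has_vector_derivative d) (at t within {0..\<tau>}) \<and> d \<in> F (x t)"
    using assms(1) unfolding trajectory_def by blast
  moreover have "abs_cont_on s \<tau> x"
    using assms(1,2) abs_cont_on_subinterval unfolding trajectory_def by blast
  moreover have "\<exists>d. (x has_vector_derivative d) (at t within {s..\<tau>}) \<and> w \<bullet> d \<le> K"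
    if "t \<in> {s..<\<tau>} - N" for t
    using N that assms(2) bound by (force intro: has_vector_derivative_within_subset)
  ultimately show ?thesis using abs_cont_on_inner_increment_le assms(3) by blast
qed

lemma trajectory_increment_le:
  assumes "trajectory F \<tau> x" "0 \<le> s" "s \<le> \<tau>" "M \<ge> 0"
    and bound: "\<And>t v. t \<in> {s..\<tau>} \<Longrightarrow> v \<in> F (x t) \<Longrightarrow> norm v \<le> M"
  shows "norm (x \<tau> - x s) \<le> M * (\<tau> - s)"
proof -
  let ?w = "x \<tau> - x s"
  have "?w \<bullet> v \<le> norm ?w * M" if "t \<in> {s..\<tau>}" "v \<in> F (x t)" for t v
    using norm_cauchy_schwarz[of ?w v] bound[OF that] mult_left_mono[of "norm v" M "norm ?w"] by simp
  then have "?w \<bullet> (x \<tau> - x s) \<le> (norm ?w * M) * (\<tau> - s)"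
    by (rule trajectory_inner_increment_le[OF assms(1-3)])
  then have "(norm ?w)\<^sup>2 \<le> norm ?w * (M * (\<tau> - s))" by (simp add: power2_norm_eq_inner mult.assoc)
  then show ?thesis using assms(3,4) by (cases "?w = 0") (auto simp: power2_eq_square)
qed

lemma min_time_nonneg: "0 \<le> min_time F S x0"
  unfolding min_time_def by (rule Inf_greatest) auto

lemma optimal_trajectory_avoids_target:
  assumes "min_time F S x0 = ereal \<tau>" "trajectory F \<tau> x" "x 0 = x0" "x0 \<notin> S" "0 \<le> s" "s < \<tau>"
  shows "x s \<notin> S"
proof
  assume "x s \<in> S"
  then have "s > 0" using assms(3-5) by (cases "s = 0") auto
  moreover have "trajectory F s x" using trajectory_restrict[OF assms(2,5)] assms(6) by simp
  ultimately have "min_time F S x0 \<le> ereal s"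
    unfolding min_time_def using \<open>x s \<in> S\<close> assms(3) by (intro Inf_lower) auto
  then show False using assms(1,6) by simp
qed

lemma grad_p_H_has_derivative:
  "\<exists>g. (hamiltonian F y has_derivative (\<lambda>h. g \<bullet> h)) (at q) \<Longrightarrow>
    (hamiltonian F y has_derivative (\<lambda>h. grad_p_H F y q \<bullet> h)) (at q)"
  unfolding grad_p_H_def by (rule someI_ex)

section \<open>The Hamiltonian\<close>

locale lipschitz_compact_multifun =
  fixes F :: "'a::euclidean_space \<Rightarrow> 'a set" and L :: real
  assumes F_ne: "\<And>y. F y \<noteq> {}" and F_compact: "\<And>y. compact (F y)"
    and L_nonneg: "L \<ge> 0" and F_lipschitz: "\<And>y z v. v \<in> F y \<Longrightarrow> \<exists>w\<in>F z. dist v w \<le> L * dist y z"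
begin

lemma inner_le_hamiltonian: "v \<in> F y \<Longrightarrow> q \<bullet> v \<le> hamiltonian F y q"
proof -
  obtain B where "\<forall>v\<in>F y. norm v \<le> B" using compact_imp_bounded[OF F_compact] bounded_iff by blast
  then have "bdd_above ((\<lambda>v. q \<bullet> v) ` F y)"
    by (intro bdd_aboveI2[of _ _ "norm q * B"])
       (meson norm_cauchy_schwarz mult_left_mono norm_ge_zero order_trans)
  then show "v \<in> F y \<Longrightarrow> q \<bullet> v \<le> hamiltonian F y q"
    unfolding hamiltonian_def by (rule cSUP_upper2) auto
qed

lemma hamiltonian_le: "(\<And>v. v \<in> F y \<Longrightarrow> q \<bullet> v \<le> c) \<Longrightarrow> hamiltonian F y q \<le> c"
  unfolding hamiltonian_def by (rule cSUP_least[OF F_ne])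

lemma hamiltonian_scaleR:
  assumes "c > 0"
  shows "hamiltonian F y (c *\<^sub>R q) = c * hamiltonian F y q"
proof (rule antisym)
  show "hamiltonian F y (c *\<^sub>R q) \<le> c * hamiltonian F y q"
    using inner_le_hamiltonian assms by (intro hamiltonian_le) (simp add: mult_left_mono)
  have "hamiltonian F y q \<le> hamiltonian F y (c *\<^sub>R q) / c"
  proof (rule hamiltonian_le)
    fix v assume "v \<in> F y"
    then have "(c *\<^sub>R q) \<bullet> v \<le> hamiltonian F y (c *\<^sub>R q)" by (rule inner_le_hamiltonian)
    then show "q \<bullet> v \<le> hamiltonian F y (c *\<^sub>R q) / c" using assms by (simp add: pos_le_divide_eq mult.commute)
  qed
  then show "c * hamiltonian F y q \<le> hamiltonian F y (c *\<^sub>R q)"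
    using assms by (simp add: pos_le_divide_eq mult.commute)
qed

lemma hamiltonian_lipschitz_state:
  "\<bar>hamiltonian F y q - hamiltonian F z q\<bar> \<le> L * norm q * norm (y - z)"
proof -
  have "hamiltonian F y q \<le> hamiltonian F z q + L * norm q * norm (y - z)" for y z
  proof (rule hamiltonian_le)
    fix v assume "v \<in> F y"
    then obtain w where "w \<in> F z" "norm (v - w) \<le> L * norm (y - z)"
      using F_lipschitz[OF \<open>v \<in> F y\<close>, of z] by (auto simp: dist_norm)
    then have "q \<bullet> w \<le> hamiltonian F z q" "q \<bullet> (v - w) \<le> norm q * (L * norm (y - z))"
      using inner_le_hamiltonian norm_cauchy_schwarz[of q "v - w"] mult_left_mono[of _ _ "norm q"]
      by (auto intro: order_trans)
    then show "q \<bullet> v \<le> hamiltonian F z q + L * norm q * norm (y - z)"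
      by (simp add: inner_diff_right algebra_simps)
  qed
  from this[of y z] this[of z y] show ?thesis by (simp add: norm_minus_commute abs_le_iff)
qed

lemma hamiltonian_lipschitz_costate:
  assumes "\<And>v. v \<in> F y \<Longrightarrow> norm v \<le> M"
  shows "\<bar>hamiltonian F y q - hamiltonian F y q'\<bar> \<le> M * norm (q - q')"
proof -
  have "hamiltonian F y q \<le> hamiltonian F y q' + M * norm (q - q')" for q q'
  proof (rule hamiltonian_le)
    fix v assume "v \<in> F y"
    then have "q' \<bullet> v \<le> hamiltonian F y q'" "(q - q') \<bullet> v \<le> norm (q - q') * M"
      using inner_le_hamiltonian norm_cauchy_schwarz[of "q - q'" v] assms mult_left_mono[of _ M "norm (q - q')"]
      by (auto intro: order_trans)
    then show "q \<bullet> v \<le> hamiltonian F y q' + M * norm (q - q')"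
      by (simp add: inner_diff_left algebra_simps)
  qed
  from this[of q q'] this[of q' q] show ?thesis by (simp add: norm_minus_commute abs_le_iff)
qed

lemma F_bounded_along:
  fixes x :: "real \<Rightarrow> 'a"
  assumes "continuous_on {a..b} x"
  obtains M where "M \<ge> 0" "\<And>t v. t \<in> {a..b} \<Longrightarrow> v \<in> F (x t) \<Longrightarrow> norm v \<le> M"
proof -
  obtain B where B: "\<forall>v\<in>F 0. norm v \<le> B" using compact_imp_bounded[OF F_compact] bounded_iff by blast
  obtain R where R: "\<forall>t\<in>{a..b}. norm (x t) \<le> R"
    using compact_imp_bounded[OF compact_continuous_image[OF assms compact_Icc]] by (force simp: bounded_iff)
  have "norm v \<le> \<bar>B\<bar> + L * \<bar>R\<bar>" if "t \<in> {a..b}" "v \<in> F (x t)" for t v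
  proof -
    obtain w where "w \<in> F 0" "norm (v - w) \<le> L * norm (x t)"
      using F_lipschitz[OF \<open>v \<in> F (x t)\<close>, of 0] by (auto simp: dist_norm)
    moreover have "norm (x t) \<le> \<bar>R\<bar>" using R that by force
    then have "L * norm (x t) \<le> L * \<bar>R\<bar>" using L_nonneg by (rule mult_left_mono)
    ultimately show ?thesis using B norm_triangle_ineq[of w "v - w"] by force
  qed
  then show thesis using L_nonneg by (intro that[of "\<bar>B\<bar> + L * \<bar>R\<bar>"]) auto
qed

lemma hamiltonian_along_abs_cont:
  assumes x: "abs_cont_on a b x" and p: "abs_cont_on a b p"
  shows "abs_cont_on a b (\<lambda>t. hamiltonian F (x t) (p t))"
proof -
  obtain M where "M \<ge> 0" and M: "\<And>t v. t \<in> {a..b} \<Longrightarrow> v \<in> F (x t) \<Longrightarrow> norm v \<le> M"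
    using F_bounded_along[OF abs_cont_on_imp_continuous_on[OF x]] by blast
  obtain P where P: "\<forall>t\<in>{a..b}. norm (p t) \<le> P"
    using compact_imp_bounded[OF compact_continuous_image[OF abs_cont_on_imp_continuous_on[OF p] compact_Icc]]
    by (force simp: bounded_iff)
  let ?C = "L * \<bar>P\<bar> + M"
  show ?thesis
  proof (rule abs_cont_on_dominated[OF x p, of ?C])
    show "?C \<ge> 0" using L_nonneg \<open>M \<ge> 0\<close> by simp
    fix u v assume uv: "a \<le> u" "u \<le> v" "v \<le> b"
    have "norm (p v) \<le> P" using P uv by simp
    then have "norm (p v) \<le> \<bar>P\<bar>" using abs_ge_self[of P] by linarith
    then have "L * norm (p v) \<le> L * \<bar>P\<bar>" using L_nonneg by (rule mult_left_mono)
    then have "L * norm (p v) \<le> ?C" using \<open>M \<ge> 0\<close> by linarith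
    have "\<bar>hamiltonian F (x v) (p v) - hamiltonian F (x u) (p v)\<bar> \<le> L * norm (p v) * norm (x v - x u)"
      by (rule hamiltonian_lipschitz_state)
    also have "\<dots> \<le> ?C * norm (x v - x u)"
      using \<open>L * norm (p v) \<le> ?C\<close> by (rule mult_right_mono) simp
    finally have "\<bar>hamiltonian F (x v) (p v) - hamiltonian F (x u) (p v)\<bar> \<le> ?C * norm (x v - x u)" .
    moreover have "\<bar>hamiltonian F (x u) (p v) - hamiltonian F (x u) (p u)\<bar> \<le> M * norm (p v - p u)"
      using M[of u] uv by (intro hamiltonian_lipschitz_costate) auto
    moreover have "M * norm (p v - p u) \<le> ?C * norm (p v - p u)"
      using L_nonneg by (intro mult_right_mono) auto
    moreover have "0 \<le> ?C * (v - u)" using uv \<open>?C \<ge> 0\<close> by simp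
    ultimately show "norm (hamiltonian F (x v) (p v) - hamiltonian F (x u) (p u))
        \<le> ?C * (norm (x v - x u) + norm (p v - p u) + (v - u))"
      unfolding distrib_left real_norm_def by linarith
  qed
qed

lemma continuous_on_hamiltonian_state: "continuous_on UNIV (\<lambda>y. hamiltonian F y q)"
  using hamiltonian_lipschitz_state L_nonneg
  by (intro lipschitz_on_continuous_on[of "L * norm q"]) (simp add: lipschitz_on_def dist_norm)

lemma hamiltonian_proximal_normal_nonneg:
  assumes traj: "trajectory F \<tau> x" and "0 < \<tau>" and in_Q: "\<And>s. 0 \<le> s \<Longrightarrow> s < \<tau> \<Longrightarrow> x s \<in> Q"
    and \<xi>: "\<xi> \<in> proximal_normal Q (x \<tau>)"
  shows "0 \<le> hamiltonian F (x \<tau>) \<xi>"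
proof (rule ccontr)
  define h where "h = hamiltonian F (x \<tau>) \<xi>"
  assume "\<not> 0 \<le> hamiltonian F (x \<tau>) \<xi>"
  then have "h < 0" by (simp add: h_def)
  obtain \<sigma> where "\<sigma> \<ge> 0" and \<sigma>: "\<forall>z\<in>Q. \<xi> \<bullet> (z - x \<tau>) \<le> \<sigma> * (norm (z - x \<tau>))\<^sup>2"
    using \<xi> unfolding proximal_normal_def by blast
  have x_cont: "continuous_on {0..\<tau>} x"
    using traj abs_cont_on_imp_continuous_on unfolding trajectory_def by blast
  obtain M where "M \<ge> 0" and M: "\<And>t v. t \<in> {0..\<tau>} \<Longrightarrow> v \<in> F (x t) \<Longrightarrow> norm v \<le> M"
    using F_bounded_along[OF x_cont] by blast
  have "continuous_on {0..\<tau>} (\<lambda>t. hamiltonian F (x t) \<xi>)"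
    using continuous_on_compose2[OF continuous_on_hamiltonian_state x_cont] by simp
  then have "\<exists>\<eta>>0. \<forall>t\<in>{0..\<tau>}. dist t \<tau> < \<eta> \<longrightarrow> dist (hamiltonian F (x t) \<xi>) h < - h / 2"
    using \<open>0 < \<tau>\<close> \<open>h < 0\<close> unfolding continuous_on_iff h_def by simp
  then obtain \<eta> where "\<eta> > 0" and \<eta>: "\<forall>t\<in>{0..\<tau>}. dist t \<tau> < \<eta> \<longrightarrow> dist (hamiltonian F (x t) \<xi>) h < - h / 2"
    by blast
  have pos: "\<sigma> * M\<^sup>2 + 1 > 0" using \<open>\<sigma> \<ge> 0\<close> by (simp add: add_nonneg_pos)
  then have "- h / 2 / (\<sigma> * M\<^sup>2 + 1) > 0" using \<open>h < 0\<close> by (intro divide_pos_pos) auto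
  moreover have "0 < min \<eta> \<tau>" using \<open>\<eta> > 0\<close> \<open>0 < \<tau>\<close> by simp
  ultimately obtain \<delta> where "0 < \<delta>" "\<delta> < min \<eta> \<tau>" and "\<delta> < - h / 2 / (\<sigma> * M\<^sup>2 + 1)"
    using field_lbound_gt_zero by blast
  then have "\<delta> * (\<sigma> * M\<^sup>2 + 1) < - h / 2" by (simp only: pos_less_divide_eq[OF pos])
  then have small: "\<sigma> * M\<^sup>2 * \<delta> < - h / 2" using \<open>0 < \<delta>\<close> by (simp add: algebra_simps)
  define s where "s = \<tau> - \<delta>"
  have s: "0 \<le> s" "s < \<tau>" using \<open>0 < \<delta>\<close> \<open>\<delta> < min \<eta> \<tau>\<close> by (auto simp: s_def)
  have drift: "\<xi> \<bullet> v \<le> h / 2" if "t \<in> {s..\<tau>}" "v \<in> F (x t)" for t v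
  proof -
    have "dist (hamiltonian F (x t) \<xi>) h < - h / 2"
      using \<eta> that(1) s \<open>\<delta> < min \<eta> \<tau>\<close> by (auto simp: s_def dist_real_def)
    then show ?thesis using inner_le_hamiltonian[OF that(2), of \<xi>] by (simp add: dist_real_def abs_less_iff)
  qed
  have "norm v \<le> M" if "t \<in> {s..\<tau>}" "v \<in> F (x t)" for t v using M[of t v] that s by auto
  then have "norm (x \<tau> - x s) \<le> M * (\<tau> - s)"
    by (rule trajectory_increment_le[OF traj s(1) less_imp_le[OF s(2)] \<open>M \<ge> 0\<close>])
  then have "(norm (x s - x \<tau>))\<^sup>2 \<le> (M * \<delta>)\<^sup>2"
    by (intro power_mono) (simp_all add: s_def norm_minus_commute)
  then have "\<sigma> * (norm (x s - x \<tau>))\<^sup>2 \<le> \<sigma> * (M * \<delta>)\<^sup>2" using \<open>\<sigma> \<ge> 0\<close> by (rule mult_left_mono)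
  moreover have "\<xi> \<bullet> (x s - x \<tau>) \<le> \<sigma> * (norm (x s - x \<tau>))\<^sup>2" using \<sigma> in_Q[OF s] by blast
  moreover have "\<xi> \<bullet> (x \<tau> - x s) \<le> h / 2 * \<delta>"
    using trajectory_inner_increment_le[OF traj s(1) less_imp_le[OF s(2)] drift] by (simp add: s_def)
  moreover have "\<xi> \<bullet> (x s - x \<tau>) = - (\<xi> \<bullet> (x \<tau> - x s))" by (simp add: inner_diff_right)
  moreover have "\<sigma> * (M * \<delta>)\<^sup>2 = \<sigma> * M\<^sup>2 * \<delta> * \<delta>" by (simp add: power_mult_distrib power2_eq_square)
  moreover have "\<sigma> * M\<^sup>2 * \<delta> * \<delta> < - h / 2 * \<delta>" using small \<open>0 < \<delta>\<close> by (rule mult_strict_right_mono)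
  ultimately show False by linarith
qed

lemma optimal_trajectory_hamiltonian_nonneg:
  assumes T: "min_time F S x0 = ereal \<tau>" and traj: "trajectory F \<tau> x" and "x 0 = x0" "x0 \<notin> S"
    and "x \<tau> \<in> S" and \<xi>: "\<xi> \<in> proximal_normal (closure (UNIV - S)) (x \<tau>)"
  shows "0 \<le> hamiltonian F (x \<tau>) \<xi>"
proof -
  have "0 \<le> \<tau>" using min_time_nonneg[of F S x0] T by simp
  moreover have "\<tau> \<noteq> 0" using assms(3-5) by auto
  ultimately have "0 < \<tau>" by simp
  have "x s \<in> closure (UNIV - S)" if "0 \<le> s" "s < \<tau>" for s
    using optimal_trajectory_avoids_target[OF T traj assms(3,4) that]
    by (intro subsetD[OF closure_subset]) simp
  then show ?thesis by (rule hamiltonian_proximal_normal_nonneg[OF traj \<open>0 < \<tau>\<close> _ \<xi>])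
qed

end

locale hamiltonian_regularity =
  fixes H :: "'a::euclidean_space \<Rightarrow> 'a \<Rightarrow> real" and G :: "'a \<Rightarrow> 'a \<Rightarrow> 'a" and K1 c0 :: real
  assumes H_has_derivative: "\<And>y q. q \<noteq> 0 \<Longrightarrow> (H y has_derivative (\<lambda>h. G y q \<bullet> h)) (at q)"
    and G_lipschitz: "\<And>y z q. q \<noteq> 0 \<Longrightarrow> norm (G y q - G z q) \<le> K1 * norm (y - z)"
    and K1_nonneg: "K1 \<ge> 0"
    and H_semiconvex: "\<And>q. semiconvex_with (c0 * norm q) (\<lambda>y. H y q)"
begin

lemma mixed_difference_le:
  assumes "norm (q' - q) < norm q"
  shows "\<bar>(H z q' - H z q) - (H y q' - H y q)\<bar> \<le> K1 * norm (z - y) * norm (q' - q)"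
proof -
  have "closed_segment q q' \<subseteq> ball q (norm q)"
    using assms by (intro closed_segment_subset) (auto simp: dist_norm norm_minus_commute)
  then have nonzero: "r \<noteq> 0" if "r \<in> closed_segment q q'" for r
    using that by (auto simp: dist_norm)
  have "((\<lambda>r. H z r - H y r) has_derivative (\<lambda>h. (G z r - G y r) \<bullet> h)) (at r within closed_segment q q')"
    if "r \<in> closed_segment q q'" for r
    using has_derivative_diff[OF H_has_derivative H_has_derivative, OF nonzero nonzero, OF that that]
    by (simp add: inner_diff_left has_derivative_at_withinI)
  moreover have "onorm (\<lambda>h. (G z r - G y r) \<bullet> h) \<le> K1 * norm (z - y)"
    if "r \<in> closed_segment q q'" for r
  proof (rule onorm_le)
    fix h
    have "norm ((G z r - G y r) \<bullet> h) \<le> norm (G z r - G y r) * norm h"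
      using Cauchy_Schwarz_ineq2 by simp
    also have "\<dots> \<le> K1 * norm (z - y) * norm h"
      using G_lipschitz[OF nonzero[OF that]] by (intro mult_right_mono) auto
    finally show "norm ((G z r - G y r) \<bullet> h) \<le> K1 * norm (z - y) * norm h" .
  qed
  ultimately have "norm ((H z q' - H y q') - (H z q - H y q)) \<le> K1 * norm (z - y) * norm (q' - q)"
    by (intro differentiable_bound[OF convex_closed_segment]) auto
  then show ?thesis by (simp add: algebra_simps)
qed

text \<open>Near \<open>t\<close>, \<open>H(x(s), p(s)) - H(x(t), p(t)) \<ge> \<psi>(s) - \<psi>(t)\<close> by the subgradient inequality for the
  semiconvex \<open>H(\<cdot>, p(t))\<close>, the mixed-difference estimate and \<open>K1 a b \<le> K1 (a\<^sup>2 + b\<^sup>2) / 2\<close>;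
  the state and adjoint equations make \<open>\<psi>'(t) = 0\<close>.\<close>

lemma dini_stationary_along_extremal:
  assumes "t \<in> T"
    and x': "(x has_vector_derivative G (x t) (p t)) (at t within T)"
    and p': "(p has_vector_derivative p') (at t within T)"
    and adjoint: "- p' \<in> clarke_grad (\<lambda>y. H y (p t)) (x t)"
    and "p t \<noteq> 0"
  shows "dini_stationary (\<lambda>s. H (x s) (p s)) T t"
  unfolding dini_stationary_def
proof (intro allI impI)
  fix \<epsilon> :: real assume "\<epsilon> > 0"
  define y where "y = x t"
  define q where "q = p t"
  define \<psi> where "\<psi> s = - (p' \<bullet> x s) - c0 * norm q * ((x s - y) \<bullet> (x s - y)) + H y (p s)
      - K1 / 2 * ((x s - y) \<bullet> (x s - y) + (p s - q) \<bullet> (p s - q))" for s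
  have "((\<lambda>s. H y (p s)) has_derivative (\<lambda>h. G y q \<bullet> (h *\<^sub>R p'))) (at t within T)"
    using has_derivative_compose[OF p'[unfolded has_vector_derivative_def] H_has_derivative[OF \<open>p t \<noteq> 0\<close>]]
    by (simp add: y_def q_def)
  then have "(\<psi> has_derivative (\<lambda>h. 0)) (at t within T)"
    unfolding \<psi>_def using x' p' unfolding has_vector_derivative_def
    by (auto intro!: derivative_eq_intros simp: fun_eq_iff y_def[symmetric] q_def[symmetric] inner_commute)
  then obtain d1 where "d1 > 0" and d1: "\<forall>s\<in>T. norm (s - t) < d1 \<longrightarrow> norm (\<psi> s - \<psi> t) \<le> \<epsilon> * norm (s - t)"
    using \<open>\<epsilon> > 0\<close> unfolding has_derivative_within_alt by auto
  obtain d2 where "d2 > 0" and d2: "\<forall>s\<in>T. dist s t < d2 \<longrightarrow> dist (p s) q < norm q"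
    using has_vector_derivative_continuous[OF p'] \<open>p t \<noteq> 0\<close> unfolding continuous_within_eps_delta q_def
    by (metis zero_less_norm_iff)
  have "H y q - \<epsilon> * \<bar>s - t\<bar> \<le> H (x s) (p s)" if "s \<in> T" "\<bar>s - t\<bar> < min d1 d2" for s
  proof -
    let ?a = "norm (x s - y)" and ?b = "norm (p s - q)"
    have "\<bar>(H (x s) (p s) - H (x s) q) - (H y (p s) - H y q)\<bar> \<le> K1 * ?a * ?b"
      using mixed_difference_le d2 that by (simp add: dist_norm)
    moreover have "H y q + (- p') \<bullet> (x s - y) - c0 * norm q * ?a\<^sup>2 \<le> H (x s) q"
      using semiconvex_clarke_subgradient_ineq[OF H_semiconvex adjoint] by (simp add: y_def q_def)
    moreover have "K1 * ?a * ?b \<le> K1 / 2 * (?a\<^sup>2 + ?b\<^sup>2)"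
      using K1_nonneg sum_squares_bound[of ?a ?b] mult_left_mono[of "?a * ?b" "(?a\<^sup>2 + ?b\<^sup>2) / 2" K1]
      by (simp add: mult.assoc)
    moreover have "\<psi> s - \<psi> t \<ge> - (\<epsilon> * \<bar>s - t\<bar>)" using d1 that by force
    moreover have "\<psi> t = - (p' \<bullet> y) + H y q" by (simp add: \<psi>_def y_def q_def)
    ultimately show ?thesis
      unfolding \<psi>_def power2_norm_eq_inner by (simp add: inner_diff_right abs_le_iff algebra_simps)
  qed
  then show "\<exists>d>0. \<forall>s\<in>T. \<bar>s - t\<bar> < d \<longrightarrow> H (x t) (p t) - \<epsilon> * \<bar>s - t\<bar> \<le> H (x s) (p s)"
    using \<open>d1 > 0\<close> \<open>d2 > 0\<close> unfolding y_def q_def by (intro exI[of _ "min d1 d2"]) auto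
qed

lemma hamiltonian_constant_along_extremal:
  assumes ac: "abs_cont_on a b (\<lambda>t. H (x t) (p t))" and p_ne: "\<And>t. t \<in> {a..b} \<Longrightarrow> p t \<noteq> 0"
    and "\<exists>N. N \<in> null_sets lebesgue \<and> (\<forall>t\<in>{a..b} - N.
        (\<exists>d. (p has_vector_derivative d) (at t within {a..b}) \<and>
             - d \<in> clarke_grad (\<lambda>y. H y (p t)) (x t)) \<and>
        (x has_vector_derivative G (x t) (p t)) (at t within {a..b}))"
    and "t \<in> {a..b}"
  shows "H (x t) (p t) = H (x b) (p b)"
proof -
  obtain N where N: "N \<in> null_sets lebesgue" and extremal: "\<And>t. t \<in> {a..b} - N \<Longrightarrow>
      (\<exists>d. (p has_vector_derivative d) (at t within {a..b}) \<and> - d \<in> clarke_grad (\<lambda>y. H y (p t)) (x t)) \<and>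
      (x has_vector_derivative G (x t) (p t)) (at t within {a..b})"
    using assms(3) by blast
  have "dini_stationary (\<lambda>s. H (x s) (p s)) {a..b} s" if "s \<in> {a..b} - N" for s
    using extremal[OF that] p_ne[of s] that by (auto intro: dini_stationary_along_extremal)
  then show ?thesis using abs_cont_on_constant_if_dini_stationary[OF ac N _ \<open>t \<in> {a..b}\<close>] by blast
qed

end

theorem proposition4p2:
  fixes F :: "'a::euclidean_space \<Rightarrow> 'a set"
    and S :: "'a set" and x0 :: 'a and \<tau> :: real
    and x p :: "real \<Rightarrow> 'a" and \<xi> :: 'a
  assumes F_ne: "\<And>y. F y \<noteq> {}"
    and F_convex: "\<And>y. convex (F y)"
    and F_compact: "\<And>y. compact (F y)"
    and F_lip: "lipschitz_multifun F"
    and H1: "\<exists>c0\<ge>0. \<forall>q. semiconvex_with (c0 * norm q) (\<lambda>y. hamiltonian F y q)"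
    and H2_ex: "\<And>y q. q \<noteq> 0 \<Longrightarrow>
        \<exists>g. ((\<lambda>r. hamiltonian F y r) has_derivative (\<lambda>h. g \<bullet> h)) (at q)"
    and H2_lip: "\<exists>K1\<ge>0. \<forall>y z q. q \<noteq> 0 \<longrightarrow>
        norm (grad_p_H F y q - grad_p_H F z q) \<le> K1 * norm (y - z)"
    and S_closed: "closed S"
    and x0_notin: "x0 \<notin> S"
    and T_x0: "min_time F S x0 = ereal \<tau>"
    and x_traj: "trajectory F \<tau> x"
    and x_start: "x 0 = x0"
    and x_end: "x \<tau> \<in> S"
    and \<xi>_unit: "norm \<xi> = 1"
    and \<xi>_normal: "\<xi> \<in> proximal_normal (closure (UNIV - S)) (x \<tau>)"
    and p_ac: "abs_cont_on 0 \<tau> p"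
    and p_ne: "\<And>t. t \<in> {0..\<tau>} \<Longrightarrow> p t \<noteq> 0"
    and adj: "\<exists>N. N \<in> null_sets lebesgue \<and> (\<forall>t\<in>{0..\<tau>} - N.
        (\<exists>d. (p has_vector_derivative d) (at t within {0..\<tau>}) \<and>
             - d \<in> clarke_grad (\<lambda>y. hamiltonian F y (p t)) (x t)) \<and>
        (x has_vector_derivative grad_p_H F (x t) (p t)) (at t within {0..\<tau>}))"
  shows "(hamiltonian F (x \<tau>) \<xi> \<noteq> 0 \<and> p \<tau> = \<xi> /\<^sub>R hamiltonian F (x \<tau>) \<xi>
            \<longrightarrow> (\<forall>t\<in>{0..\<tau>}. hamiltonian F (x t) (p t) = 1))
       \<and> (hamiltonian F (x \<tau>) \<xi> = 0 \<and> p \<tau> = \<xi>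
            \<longrightarrow> (\<forall>t\<in>{0..\<tau>}. hamiltonian F (x t) (p t) = 0))"
proof -
  obtain L where "lipschitz_compact_multifun F L"
    using F_lip F_ne F_compact unfolding lipschitz_multifun_def lipschitz_compact_multifun_def by blast
  then interpret lipschitz_compact_multifun F L .
  obtain c0 K1 where "hamiltonian_regularity (hamiltonian F) (grad_p_H F) K1 c0"
    using H1 H2_lip H2_ex grad_p_H_has_derivative unfolding hamiltonian_regularity_def by blast
  then interpret hamiltonian_regularity "hamiltonian F" "grad_p_H F" K1 c0 .
  have "0 \<le> hamiltonian F (x \<tau>) \<xi>"
    by (rule optimal_trajectory_hamiltonian_nonneg[OF T_x0 x_traj x_start x0_notin x_end \<xi>_normal])
  have "abs_cont_on 0 \<tau> (\<lambda>t. hamiltonian F (x t) (p t))"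
    using x_traj p_ac hamiltonian_along_abs_cont unfolding trajectory_def by blast
  then have const: "hamiltonian F (x t) (p t) = hamiltonian F (x \<tau>) (p \<tau>)" if "t \<in> {0..\<tau>}" for t
    by (rule hamiltonian_constant_along_extremal[OF _ p_ne adj that])
  show ?thesis
  proof (intro conjI impI)
    assume "hamiltonian F (x \<tau>) \<xi> \<noteq> 0 \<and> p \<tau> = \<xi> /\<^sub>R hamiltonian F (x \<tau>) \<xi>"
    with \<open>0 \<le> hamiltonian F (x \<tau>) \<xi>\<close> have "hamiltonian F (x \<tau>) (p \<tau>) = 1"
      using hamiltonian_scaleR[of "inverse (hamiltonian F (x \<tau>) \<xi>)" "x \<tau>" \<xi>] by simp
    then show "\<forall>t\<in>{0..\<tau>}. hamiltonian F (x t) (p t) = 1" using const by simp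
  next
    assume "hamiltonian F (x \<tau>) \<xi> = 0 \<and> p \<tau> = \<xi>"
    then show "\<forall>t\<in>{0..\<tau>}. hamiltonian F (x t) (p t) = 0" using const by simp
  qed
qed

end
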